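(* Under the standing assumptions below: (i) if $e\in S$, $f\in S_2$ and $ef=f$, then $e\in S_2$; (ii) $S_1\cdot S_1\subseteq S_1\cup S_0$.
   Context: Standing assumptions: $S$ is a semilattice (commutative semigroup of idempotents), $0\le\delta<0.03$, and $\theta:S\to M_2(\mathbb C)$ satisfies $\|\theta(e)\theta(f)-\theta(ef)\|_{HS}\le\delta$ for all $e,f\in S$, where $\|A\|_{HS}=(\operatorname{tr}(A^*A))^{1/2}$. For $k\in\{0,1,2\}$, $S_k=\{x\in S:\ |\operatorname{tr}\theta(x)-k|<0.95\}$; these sets are pairwise disjoint and cover $S$. *)

theory Defs
  imports "HOL-Analysis.Analysis"
begin

definition mtrace :: "complex^2^2 \<Rightarrow> complex" where
  "mtrace A = (\<Sum>i\<in>UNIV. A $ i $ i)"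

text \<open>Hilbert-Schmidt (Frobenius) norm: sqrt(tr(A^* A)) = sqrt(sum of |a_ij|^2).\<close>
definition hs_norm :: "complex^2^2 \<Rightarrow> real" where
  "hs_norm A = sqrt (\<Sum>i\<in>UNIV. \<Sum>j\<in>UNIV. (cmod (A $ i $ j))\<^sup>2)"

definition Slev :: "('a \<Rightarrow> complex^2^2) \<Rightarrow> nat \<Rightarrow> 'a set" where
  "Slev \<theta> k = {x. cmod (mtrace (\<theta> x) - of_nat k) < 0.95}"

end

theory Submission
  imports Defs
begin

(* Call A almost idempotent if hs_norm (A ** A - A) <= delta < 3/100.  If u, v are the
   eigenvalues of A (a pair with u + v = trace A and u v = det A), then u^2 - u and
   v^2 - v are the eigenvalues of A ** A - A, and Schur's inequality bounds
   |u^2 - u|^2 + |v^2 - v|^2 by the squared Hilbert-Schmidt norm.  Hence each eigenvalue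
   lies near 0 or 1, with total deviation below 1/20, so the trace of A is within 1/20
   of 0, 1 or 2.

   The key "absorption" lemma: if A, B are almost idempotent, A B ~ B and trace B is
   not far from 2, then trace A is within 1/20 of 2.  Both eigenvalues of B are near 1,
   so det B ~ 1 and, by Cayley-Hamilton, the entries of B are bounded.  Then
   det A det B = det (A B) ~ det B forces det A away from 0, which rules out an eigenvalue
   of A near 0.  Part (i) of the theorem is this lemma applied to theta e, theta f; part
   (ii) follows since trace theta (x y) near 2 would, by absorption with x (x y) = x y,
   put trace theta x near 2, contradicting x in S_1. *)

lemma hs_norm_sq:
  "(hs_norm A)^2 = cmod (A$1$1)^2 + cmod (A$1$2)^2 + cmod (A$2$1)^2 + cmod (A$2$2)^2"
  unfolding hs_norm_def sum_2 by simp

lemma hs_norm_nonneg: "0 \<le> hs_norm A"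
  unfolding hs_norm_def by (simp add: sum_nonneg)

lemma entry_le_hs_norm: "cmod (A$i$j) \<le> hs_norm A"
proof -
  have "cmod (A$i$j)^2 \<le> (hs_norm A)^2"
    unfolding hs_norm_sq using exhaust_2[of i] exhaust_2[of j] by auto
  then show ?thesis by (rule power2_le_imp_le) (rule hs_norm_nonneg)
qed

lemma mtrace_2: "mtrace A = A$1$1 + A$2$2"
  unfolding mtrace_def sum_2 by simp

lemma matrix_mult_entry_2:
  "((A::complex^2^2) ** B) $ i $ j = A$i$1 * B$1$j + A$i$2 * B$2$j"
  by (simp add: matrix_matrix_mult_def sum_2)

lemma cayley_hamilton_entry:
  fixes B :: "complex^2^2"
  shows "(B ** B - B) $ i $ j = (mtrace B - 1) * B$i$j - (if i = j then det B else 0)"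
  using exhaust_2[of i] exhaust_2[of j]
  by (auto simp: matrix_mult_entry_2 mtrace_2 det_2 algebra_simps)

definition eigpair :: "complex^2^2 \<Rightarrow> complex \<Rightarrow> complex \<Rightarrow> bool" where
  "eigpair A u v \<longleftrightarrow> u + v = mtrace A \<and> u * v = det A"

lemma eigpair_trace_det:
  assumes "eigpair A u v"
  shows "mtrace A = u + v" "det A = u * v"
  using assms unfolding eigpair_def by simp_all

lemma eigpair_exists: "\<exists>u v. eigpair A u v"
proof -
  define t where "t = mtrace A"
  define s where "s = csqrt (t^2 - 4 * det A)"
  have "s^2 = t^2 - 4 * det A" unfolding s_def by simp
  moreover have "((t + s) / 2) * ((t - s) / 2) = (t^2 - s^2) / 4"
    by (simp add: field_simps power2_eq_square)
  ultimately have "((t + s) / 2) * ((t - s) / 2) = det A" by simp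
  moreover have "(t + s) / 2 + (t - s) / 2 = t" by (simp add: field_simps)
  ultimately show ?thesis unfolding eigpair_def t_def by blast
qed

lemma eigpair_sq_minus:
  assumes "eigpair A u v"
  shows "eigpair (A ** A - A) (u^2 - u) (v^2 - v)"
proof -
  have sum: "u + v = A$1$1 + A$2$2" and prod: "u * v = A$1$1 * A$2$2 - A$1$2 * A$2$1"
    using assms unfolding eigpair_def mtrace_2 det_2 by auto
  have "(u^2 - u) + (v^2 - v) = (u + v)^2 - 2 * (u * v) - (u + v)"
    by (simp add: power2_eq_square algebra_simps)
  moreover have "(u^2 - u) * (v^2 - v) = (u * v) * ((u * v) - (u + v) + 1)"
    by (simp add: power2_eq_square algebra_simps)
  ultimately show ?thesis
    unfolding eigpair_def mtrace_2 det_2 sum prod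
    by (simp add: matrix_mult_entry_2 power2_eq_square algebra_simps)
qed

text \<open>Schur's inequality for 2x2 matrices: the eigenvalues are controlled by the
  Hilbert-Schmidt norm.\<close>
lemma eigpair_hs_bound:
  assumes "eigpair M u v"
  shows "cmod u ^ 2 + cmod v ^ 2 \<le> (hs_norm M)^2"
proof -
  have parallelogram: "cmod (a + b)^2 + cmod (a - b)^2 = 2 * (cmod a^2 + cmod b^2)" for a b :: complex
    by (simp only: cmod_power2) (simp add: power2_eq_square algebra_simps)
  have sum: "u + v = M$1$1 + M$2$2" and prod: "u * v = M$1$1 * M$2$2 - M$1$2 * M$2$1"
    using assms unfolding eigpair_def mtrace_2 det_2 by auto
  have diff: "(u - v)^2 = (M$1$1 - M$2$2)^2 + 4 * (M$1$2 * M$2$1)"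
  proof -
    have "(u - v)^2 = (u + v)^2 - 4 * (u * v)" by (simp add: power2_eq_square algebra_simps)
    then show ?thesis unfolding sum prod by (simp add: power2_eq_square algebra_simps)
  qed
  have amgm: "4 * (x * y) \<le> 2 * x^2 + 2 * y^2" for x y :: real
    using zero_le_power2[of "x - y"] by (simp add: power2_eq_square algebra_simps)
  have "cmod (u - v)^2 = cmod ((M$1$1 - M$2$2)^2 + 4 * (M$1$2 * M$2$1))"
    by (simp add: norm_power diff[symmetric])
  also have "\<dots> \<le> cmod (M$1$1 - M$2$2)^2 + 4 * (cmod (M$1$2) * cmod (M$2$1))"
    using norm_triangle_ineq[of "(M$1$1 - M$2$2)^2" "4 * (M$1$2 * M$2$1)"]
    by (simp add: norm_power norm_mult)
  also have "\<dots> \<le> cmod (M$1$1 - M$2$2)^2 + 2 * cmod (M$1$2)^2 + 2 * cmod (M$2$1)^2"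
    using amgm[of "cmod (M$1$2)" "cmod (M$2$1)"] by linarith
  finally have "2 * (cmod u^2 + cmod v^2)
      \<le> cmod (M$1$1 + M$2$2)^2 + cmod (M$1$1 - M$2$2)^2 + 2 * cmod (M$1$2)^2 + 2 * cmod (M$2$1)^2"
    using parallelogram[of u v] sum by simp
  also have "\<dots> = 2 * (hs_norm M)^2"
    unfolding hs_norm_sq parallelogram[of "M$1$1" "M$2$2"] by simp
  finally show ?thesis by simp
qed

section \<open>Spectrum of an almost idempotent matrix\<close>

lemma small_factor:
  fixes x y :: real
  assumes "0 \<le> x" "0 \<le> y" "1 \<le> x + y" "x * y \<le> 3/100"
  shows "min x y \<le> (50/47) * (x * y)"
proof -
  have key: "a \<le> (50/47) * (a * b)" if "0 \<le> a" "a \<le> b" "1 \<le> a + b" "a * b \<le> 3/100"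
    for a b :: real
  proof -
    have "a * (1/2) \<le> a * b" using that by (intro mult_left_mono) auto
    then have "b \<ge> 47/50" using that by linarith
    then have "a * (47/50) \<le> a * b" using that(1) by (rule mult_left_mono)
    then show ?thesis by simp
  qed
  show ?thesis
    using key[of x y] key[of y x] assms by (cases "x \<le> y") (auto simp: mult.commute)
qed

lemma near_root_of_idempotency:
  fixes l :: complex
  assumes "cmod (l^2 - l) \<le> 3/100"
  shows "\<exists>n\<in>{0,1}. cmod (l - n) \<le> (50/47) * cmod (l^2 - l)"
proof -
  have factor: "cmod (l^2 - l) = cmod l * cmod (l - 1)"
    by (simp add: power2_eq_square norm_mult[symmetric] right_diff_distrib)
  have "1 \<le> cmod l + cmod (l - 1)"
    using norm_triangle_ineq4[of l "l - 1"] by simp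
  with small_factor[of "cmod l" "cmod (l - 1)"] assms factor show ?thesis
    by (auto simp: min_def split: if_splits)
qed

lemma almost_idempotent_spectrum:
  fixes A :: "complex^2^2"
  assumes "hs_norm (A ** A - A) \<le> \<delta>" "\<delta> < 3/100"
  shows "\<exists>u v m n. eigpair A u v \<and> m \<in> {0,1} \<and> n \<in> {0,1}
           \<and> cmod (u - m) + cmod (v - n) < 1/20"
proof -
  obtain u v where uv: "eigpair A u v" using eigpair_exists by blast
  define a where "a = cmod (u^2 - u)"
  define b where "b = cmod (v^2 - v)"
  have "a^2 + b^2 \<le> (hs_norm (A ** A - A))^2"
    using eigpair_hs_bound[OF eigpair_sq_minus[OF uv]] unfolding a_def b_def .
  also have "\<dots> < (3/100)^2"
    using assms hs_norm_nonneg by (intro power_strict_mono) auto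
  finally have ab: "a^2 + b^2 < (3/100)^2" .
  have "a^2 \<le> (3/100)^2" using ab zero_le_power2[of b] by linarith
  then have "a \<le> 3/100" by (rule power2_le_imp_le) simp
  then obtain m where m: "m \<in> {0,1}" "cmod (u - m) \<le> (50/47) * a"
    using near_root_of_idempotency[of u] unfolding a_def by blast
  have "b^2 \<le> (3/100)^2" using ab zero_le_power2[of a] by linarith
  then have "b \<le> 3/100" by (rule power2_le_imp_le) simp
  then obtain n where n: "n \<in> {0,1}" "cmod (v - n) \<le> (50/47) * b"
    using near_root_of_idempotency[of v] unfolding b_def by blast
  have "(a + b)^2 \<le> 2 * (a^2 + b^2)"
    using zero_le_power2[of "a - b"] by (simp add: power2_eq_square algebra_simps)
  also have "\<dots> < (17/400)^2" using ab by (simp add: power_divide)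
  finally have "a + b < 17/400" by (rule power_less_imp_less_base) simp
  then have "cmod (u - m) + cmod (v - n) < 1/20" using m(2) n(2) by linarith
  with uv m(1) n(1) show ?thesis by blast
qed

lemma almost_idempotent_trace:
  fixes A :: "complex^2^2"
  assumes "hs_norm (A ** A - A) \<le> \<delta>" "\<delta> < 3/100"
  shows "\<exists>k\<in>{0,1,2}. cmod (mtrace A - k) < 1/20"
proof -
  obtain u v m n where uv: "eigpair A u v" "m \<in> {0,1}" "n \<in> {0,1}"
    "cmod (u - m) + cmod (v - n) < 1/20"
    using almost_idempotent_spectrum[OF assms] by blast
  have "mtrace A - (m + n) = (u - m) + (v - n)"
    unfolding eigpair_trace_det(1)[OF uv(1)] by simp
  then have "cmod (mtrace A - (m + n)) \<le> cmod (u - m) + cmod (v - n)"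
    by (metis norm_triangle_ineq)
  then have "cmod (mtrace A - (m + n)) < 1/20" using uv(4) by linarith
  moreover have "m + n \<in> {0,1,2}" using uv(2,3) by auto
  ultimately show ?thesis by blast
qed

lemma almost_idempotent_trace_two:
  fixes B :: "complex^2^2"
  assumes "hs_norm (B ** B - B) \<le> \<delta>" "\<delta> < 3/100" "cmod (mtrace B - 2) < 19/20"
  shows "\<exists>u v. eigpair B u v \<and> cmod (u - 1) + cmod (v - 1) < 1/20"
proof -
  obtain u v m n where uv: "eigpair B u v" "m \<in> {0,1}" "n \<in> {0,1}"
    "cmod (u - m) + cmod (v - n) < 1/20"
    using almost_idempotent_spectrum[OF assms(1,2)] by blast
  have "m = 1 \<and> n = 1"
  proof (rule ccontr)
    assume "\<not> (m = 1 \<and> n = 1)"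
    then have "1 \<le> cmod (m + n - 2)" using uv(2,3) by auto
    moreover have "m + n - 2 = (mtrace B - 2) - ((u - m) + (v - n))"
      unfolding eigpair_trace_det(1)[OF uv(1)] by simp
    then have "cmod (m + n - 2) \<le> cmod (mtrace B - 2) + (cmod (u - m) + cmod (v - n))"
      by (metis norm_triangle_ineq4 norm_triangle_ineq add_left_mono order_trans)
    ultimately show False using assms(3) uv(4) by linarith
  qed
  with uv show ?thesis by auto
qed

lemma eigpair_near_one:
  assumes "eigpair B u v" "cmod (u - 1) + cmod (v - 1) < 1/20"
  shows "cmod (det B - 1) \<le> 21/400" "cmod (mtrace B - 2) < 1/20"
proof -
  define a where "a = cmod (u - 1)"
  define b where "b = cmod (v - 1)"
  have ab: "0 \<le> a" "0 \<le> b" "a + b < 1/20" using assms(2) unfolding a_def b_def by auto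
  have "det B - 1 = (u - 1) * (v - 1) + (u - 1) + (v - 1)"
    unfolding eigpair_trace_det(2)[OF assms(1)] by (simp add: algebra_simps)
  then have "cmod (det B - 1) \<le> a * b + a + b"
    unfolding a_def b_def
    by (metis norm_mult norm_triangle_ineq order_trans add_right_mono)
  moreover have "a * b \<le> (1/20) * (1/20)" using ab by (intro mult_mono) auto
  ultimately show "cmod (det B - 1) \<le> 21/400" using ab by linarith
  have "mtrace B - 2 = (u - 1) + (v - 1)"
    unfolding eigpair_trace_det(1)[OF assms(1)] by simp
  then show "cmod (mtrace B - 2) < 1/20"
    using norm_triangle_ineq[of "u - 1" "v - 1"] ab unfolding a_def b_def by simp
qed

text \<open>An almost idempotent matrix whose determinant is not small has trace near 2:
  an eigenvalue near 0 would make the determinant small.\<close>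
lemma almost_idempotent_det_large:
  fixes A :: "complex^2^2"
  assumes "hs_norm (A ** A - A) \<le> \<delta>" "\<delta> < 3/100" "1/10 \<le> cmod (det A)"
  shows "cmod (mtrace A - 2) < 1/20"
proof -
  obtain u v m n where uv: "eigpair A u v" "m \<in> {0,1}" "n \<in> {0,1}"
    "cmod (u - m) + cmod (v - n) < 1/20"
    using almost_idempotent_spectrum[OF assms(1,2)] by blast
  have small_product: "cmod x * cmod y < 1/10"
    if "cmod x + cmod (y - k) < 1/20" "k \<in> {0,1}" for x y k :: complex
  proof -
    have "cmod y \<le> cmod (y - k) + cmod k" using norm_triangle_ineq[of "y - k" k] by simp
    moreover have "cmod k \<le> 1" using that(2) by auto
    ultimately have "cmod y \<le> 21/20" using that(1) norm_ge_zero[of x] by linarith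
    moreover have "cmod x \<le> 1/20" using that norm_ge_zero[of "y - k"] by linarith
    ultimately have "cmod x * cmod y \<le> (1/20) * (21/20)" by (intro mult_mono) auto
    then show ?thesis by simp
  qed
  have "m = 1 \<and> n = 1"
  proof (rule ccontr)
    assume "\<not> (m = 1 \<and> n = 1)"
    then have "m = 0 \<or> n = 0" using uv(2,3) by auto
    then have "cmod u * cmod v < 1/10"
      using small_product[of u v n] small_product[of v u m] uv(2-4) by (auto simp: mult.commute add.commute)
    moreover have "cmod (det A) = cmod u * cmod v"
      unfolding eigpair_trace_det(2)[OF uv(1)] by (simp add: norm_mult)
    ultimately show False using assms(3) by linarith
  qed
  then show ?thesis using eigpair_near_one(2)[OF uv(1)] uv(4) by simp
qed

section \<open>The absorption lemma\<close>

text \<open>An almost idempotent matrix with trace near 2 has bounded entries, by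
  Cayley-Hamilton: \<open>(tr B - 1) B = (B\<^sup>2 - B) + det B I\<close> with \<open>tr B - 1 ~ 1\<close>.\<close>
lemma almost_idempotent_entries_bounded:
  fixes B :: "complex^2^2"
  assumes "hs_norm (B ** B - B) \<le> \<delta>" "\<delta> < 3/100" "cmod (mtrace B - 2) < 19/20"
  shows "cmod (B$i$j) \<le> 6/5"
proof -
  obtain u v where "eigpair B u v" "cmod (u - 1) + cmod (v - 1) < 1/20"
    using almost_idempotent_trace_two[OF assms] by blast
  note near = eigpair_near_one[OF this]
  have det_le: "cmod (det B) \<le> 421/400"
    using near(1) norm_triangle_ineq[of "det B - 1" 1] by simp
  have "1 \<le> cmod (mtrace B - 1) + cmod (mtrace B - 2)"
    using norm_triangle_ineq4[of "mtrace B - 1" "mtrace B - 2"] by simp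
  then have tr_ge: "19/20 \<le> cmod (mtrace B - 1)" using near(2) by linarith
  have "(mtrace B - 1) * B$i$j = (B ** B - B)$i$j + (if i = j then det B else 0)"
    by (metis cayley_hamilton_entry diff_add_cancel)
  then have "cmod ((mtrace B - 1) * B$i$j) \<le> cmod ((B ** B - B)$i$j) + cmod (det B)"
    using norm_triangle_ineq[of "(B ** B - B)$i$j" "if i = j then det B else 0"] by auto
  also have "\<dots> \<le> 3/100 + 421/400"
    using entry_le_hs_norm[of "B ** B - B" i j] assms(1,2) det_le by linarith
  finally have "cmod (mtrace B - 1) * cmod (B$i$j) \<le> 433/400" by (simp add: norm_mult)
  moreover have "(19/20) * cmod (B$i$j) \<le> cmod (mtrace B - 1) * cmod (B$i$j)"
    using tr_ge by (rule mult_right_mono) simp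
  ultimately show ?thesis by linarith
qed

lemma det_perturbation:
  fixes B F :: "complex^2^2"
  assumes B: "\<And>i j. cmod (B$i$j) \<le> \<beta>" and F: "\<And>i j. cmod (F$i$j) \<le> \<phi>"
  shows "cmod (det (B + F) - det B) \<le> 4 * (\<beta> * \<phi>) + 2 * (\<phi> * \<phi>)"
proof -
  have prod_le: "cmod (x * y) \<le> b * c" if "cmod x \<le> b" "cmod y \<le> c" for x y :: complex and b c
    using that by (simp add: norm_mult mult_mono' mult_mono)
  have tri: "cmod (x1 + x2 + x3 - (y1 + y2 + y3))
      \<le> cmod x1 + cmod x2 + cmod x3 + (cmod y1 + cmod y2 + cmod y3)" for x1 x2 x3 y1 y2 y3 :: complex
    using norm_triangle_ineq4[of "x1 + x2 + x3" "y1 + y2 + y3"]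
      norm_triangle_ineq[of "x1 + x2" x3] norm_triangle_ineq[of x1 x2]
      norm_triangle_ineq[of "y1 + y2" y3] norm_triangle_ineq[of y1 y2] by linarith
  have "det (B + F) - det B
      = (B$1$1 * F$2$2 + F$1$1 * B$2$2 + F$1$1 * F$2$2) - (B$1$2 * F$2$1 + F$1$2 * B$2$1 + F$1$2 * F$2$1)"
    unfolding det_2 by (simp add: algebra_simps)
  also have "cmod \<dots> \<le> (\<beta> * \<phi> + \<phi> * \<beta> + \<phi> * \<phi>) + (\<beta> * \<phi> + \<phi> * \<beta> + \<phi> * \<phi>)"
    using tri by (rule order_trans) (intro add_mono prod_le B F)+
  finally show ?thesis by (simp add: algebra_simps)
qed

lemma absorption:
  fixes A B :: "complex^2^2"
  assumes hA: "hs_norm (A ** A - A) \<le> \<delta>" and hB: "hs_norm (B ** B - B) \<le> \<delta>"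
    and hAB: "hs_norm (A ** B - B) \<le> \<delta>" and d: "\<delta> < 3/100"
    and trB: "cmod (mtrace B - 2) < 19/20"
  shows "cmod (mtrace A - 2) < 1/20"
proof -
  obtain u v where "eigpair B u v" "cmod (u - 1) + cmod (v - 1) < 1/20"
    using almost_idempotent_trace_two[OF hB d trB] by blast
  then have "cmod (det B - 1) \<le> 21/400" by (rule eigpair_near_one)
  then have det_B: "379/400 \<le> cmod (det B)" using norm_triangle_ineq2[of 1 "det B"]
    by (simp add: norm_minus_commute)
  define F where "F = A ** B - B"
  have "cmod (F$i$j) \<le> 3/100" for i j
    using entry_le_hs_norm[of F i j] hAB d unfolding F_def by linarith
  with almost_idempotent_entries_bounded[OF hB d trB]
  have "cmod (det (B + F) - det B) \<le> 4 * ((6/5) * (3/100)) + 2 * ((3/100) * (3/100))"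
    by (rule det_perturbation)
  moreover have "det (B + F) - det B = det B * (det A - 1)"
    unfolding F_def by (simp add: det_mul algebra_simps)
  ultimately have "cmod (det B) * cmod (det A - 1) \<le> 729/5000" by (simp add: norm_mult)
  moreover have "(379/400) * cmod (det A - 1) \<le> cmod (det B) * cmod (det A - 1)"
    using det_B by (rule mult_right_mono) simp
  ultimately have "cmod (det A - 1) \<le> 1/5" by linarith
  then have "1/10 \<le> cmod (det A)" using norm_triangle_ineq2[of 1 "det A"]
    by (simp add: norm_minus_commute)
  then show ?thesis by (rule almost_idempotent_det_large[OF hA d])
qed

theorem lemmal:
  fixes \<theta> :: "'a::ab_semigroup_mult \<Rightarrow> complex^2^2" and \<delta> :: real
  assumes idem: "\<And>x::'a. x * x = x"
    and delta: "0 \<le> \<delta>" "\<delta> < 0.03"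
    and approx: "\<And>e f. hs_norm (\<theta> e ** \<theta> f - \<theta> (e * f)) \<le> \<delta>"
  shows "(\<forall>e f. f \<in> Slev \<theta> 2 \<and> e * f = f \<longrightarrow> e \<in> Slev \<theta> 2)
         \<and> (\<forall>x\<in>Slev \<theta> 1. \<forall>y\<in>Slev \<theta> 1. x * y \<in> Slev \<theta> 1 \<union> Slev \<theta> 0)"
proof -
  have d: "\<delta> < 3/100" using delta by simp
  have idempotent: "hs_norm (\<theta> x ** \<theta> x - \<theta> x) \<le> \<delta>" for x
    using approx[of x x] idem[of x] by simp
  have Slev_iff: "x \<in> Slev \<theta> k \<longleftrightarrow> cmod (mtrace (\<theta> x) - of_nat k) < 19/20" for x k
    unfolding Slev_def by simp
  have absorb: "cmod (mtrace (\<theta> e) - 2) < 1/20" if "f \<in> Slev \<theta> 2" "e * f = f" for e f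
    using absorption[OF idempotent idempotent _ d] approx[of e f] that Slev_iff[of f 2] by simp
  show ?thesis
  proof (intro conjI allI impI ballI)
    fix e f assume "f \<in> Slev \<theta> 2 \<and> e * f = f"
    then show "e \<in> Slev \<theta> 2" using absorb Slev_iff[of e 2] by fastforce
  next
    fix x y assume x: "x \<in> Slev \<theta> 1" and "y \<in> Slev \<theta> 1"
    obtain k where k: "k \<in> {0,1,2}" "cmod (mtrace (\<theta> (x * y)) - k) < 1/20"
      using almost_idempotent_trace[OF idempotent d] by blast
    have "k \<noteq> 2"
    proof
      assume "k = 2"
      then have "x * y \<in> Slev \<theta> 2" using k(2) Slev_iff[of "x * y" 2] by simp
      moreover have "x * (x * y) = x * y" by (simp add: mult.assoc[symmetric] idem)
      ultimately have "cmod (mtrace (\<theta> x) - 2) < 1/20" by (rule absorb)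
      moreover have "1 \<le> cmod (mtrace (\<theta> x) - 1) + cmod (mtrace (\<theta> x) - 2)"
        using norm_triangle_ineq4[of "mtrace (\<theta> x) - 1" "mtrace (\<theta> x) - 2"] by simp
      ultimately show False using x Slev_iff[of x 1] by simp
    qed
    then show "x * y \<in> Slev \<theta> 1 \<union> Slev \<theta> 0"
      using k Slev_iff[of "x * y" 0] Slev_iff[of "x * y" 1] by auto
  qed
qed

end
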